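(* Let $d\ge1$, $\alpha\in(0,2)$, $\beta\in(0,1)$, $0<\eta\le\frac{\alpha}{\beta d}$, let $V_0:\mathbb{R}^d\to[0,\infty)$ be measurable with $V_0\not\equiv0$, and let $V:(0,\infty)\times\mathbb{R}^d\to[0,\infty]$ be measurable satisfying for all $t>0$, $x\in\mathbb{R}^d$ $$V(t,x)=\int_{\mathbb{R}^d}G(t,x-y)V_0(y)\,dy+\int_{\mathbb{R}^d}\int_0^t G(t-s,x-y)V(s,y)^{1+\eta}\,ds\,dy.$$ Then for every $M>0$ there exists $T_0>0$ such that for all $t\ge T_0$, $$\inf_{x\in B(0,t^{\beta/\alpha})}V(t,x)\ge M.$$
   Context: $p(t,x)$ is the transition density of the symmetric $\alpha$-stable process on $\mathbb{R}^d$; $g_\beta$ is the density of $D_1$ for a $\beta$-stable subordinator with $\mathbb{E}e^{-sD_t}=e^{-ts^\beta}$; $G(t,x)=\int_0^\infty p((t/u)^\beta,x)g_\beta(u)\,du$. *)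

theory Defs
  imports "HOL-Analysis.Analysis"
begin

text \<open>Transition density of the (rotationally) symmetric alpha-stable process on the
  Euclidean space 'a (dimension d = DIM('a)), with characteristic exponent |xi|^alpha:
  p(t,x) = (2 pi)^(-d) * integral of cos(xi . x) * exp(-t |xi|^alpha) dxi.\<close>
definition stable_density :: "real \<Rightarrow> real \<Rightarrow> 'a::euclidean_space \<Rightarrow> real" where
  "stable_density \<alpha> t x =
     (2 * pi) powr (- real DIM('a)) *
     (\<integral>\<xi>. cos (\<xi> \<bullet> x) * exp (- t * norm \<xi> powr \<alpha>) \<partial>lborel)"

text \<open>g is the density of D_1 for a beta-stable subordinator with E exp(-s D_t) = exp(-t s^beta).\<close>
definition is_subordinator_density :: "real \<Rightarrow> (real \<Rightarrow> real) \<Rightarrow> bool" where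
  "is_subordinator_density \<beta> g \<longleftrightarrow>
     g \<in> borel_measurable lborel \<and> (\<forall>u. 0 \<le> g u) \<and> (\<forall>u\<le>0. g u = 0) \<and>
     (\<forall>s>0. (\<integral>\<^sup>+ u. ennreal (exp (- s * u) * g u) \<partial>lborel) = ennreal (exp (- (s powr \<beta>))))"

definition Gker :: "real \<Rightarrow> real \<Rightarrow> (real \<Rightarrow> real) \<Rightarrow> real \<Rightarrow> 'a::euclidean_space \<Rightarrow> ennreal" where
  "Gker \<alpha> \<beta> g t x =
     (\<integral>\<^sup>+ u. indicator {0<..} u * ennreal (stable_density \<alpha> ((t / u) powr \<beta>) x * g u) \<partial>lborel)"

definition enn_powr :: "ennreal \<Rightarrow> real \<Rightarrow> ennreal" where
  "enn_powr v q = (if v = \<infinity> then \<infinity> else ennreal (enn2real v powr q))"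

end

theory Submission
  imports Defs "HOL-Probability.Sinc_Integral" "HOL-Real_Asymp.Real_Asymp"
begin

text \<open>
  Write \<open>\<rho> = \<beta>/\<alpha>\<close> and \<open>\<gamma> = d\<rho>\<close>. The kernel is bounded below on parabolic balls,
  \<open>G(\<tau>, z) \<ge> c \<tau>^(-\<gamma>)\<close> for \<open>|z| \<le> R \<tau>^\<rho>\<close>: the stable density at time 1 is bounded
  below near the origin (the cosine transform of \<open>exp(-|\<xi>|^\<alpha>)\<close> has a finite second moment),
  it is self-similar, and the subordinator charges every interval \<open>(0, \<epsilon>]\<close> because its Laplace
  transform \<open>exp(-s^\<beta>)\<close> decays more slowly than any exponential. The linear term thus gives
  \<open>V(t, x) \<ge> A t^(-\<gamma>)\<close> for \<open>|x| \<le> t^\<rho>\<close>. Inserting a bound \<open>L s^(-\<gamma>)\<close> into the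
  Duhamel term and integrating over \<open>T \<le> s \<le> t/2\<close>, \<open>|y| \<le> s^\<rho>\<close>, the ball volume \<open>s^\<gamma>\<close>
  leaves \<open>\<integral> s^(-\<eta>\<gamma>) ds \<ge> \<integral> ds/s\<close> since \<open>\<eta>\<gamma> \<le> 1\<close>; so after time \<open>2 e^k T\<close> the bound
  becomes a fixed multiple of \<open>k L^(1+\<eta>) t^(-\<gamma>)\<close>. Once \<open>L\<close> is large, the step with \<open>k = 1\<close> multiplies
  \<open>L\<close> by at least \<open>2 (2e)^\<gamma>\<close> while time grows by the factor \<open>2e\<close>, so \<open>L t^(-\<gamma>)\<close>
  doubles along a geometric sequence of times.
\<close>

section \<open>Stretched exponential integrals\<close>

lemma power_le_mult_exp_powr:
  fixes k a :: real
  assumes "0 < k" "0 < a"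
  shows "\<exists>C>0. \<forall>u\<ge>0. u ^ n \<le> C * exp (k * u powr a)"
proof -
  have "eventually (\<lambda>u. u ^ n \<le> exp (k * u powr a)) at_top"
    using assms by real_asymp
  then obtain U where U: "\<And>u. U \<le> u \<Longrightarrow> u ^ n \<le> exp (k * u powr a)"
    by (auto simp: eventually_at_top_linorder)
  define C where "C = max 1 (\<bar>U\<bar> ^ n)"
  have "u ^ n \<le> C * exp (k * u powr a)" if "0 \<le> u" for u
  proof (cases "U \<le> u")
    case True
    then have "u ^ n \<le> 1 * exp (k * u powr a)" using U by simp
    also have "\<dots> \<le> C * exp (k * u powr a)" unfolding C_def by (intro mult_right_mono) auto
    finally show ?thesis .
  next
    case False
    then have "u ^ n \<le> C * 1" unfolding C_def using that by (simp add: power_mono le_max_iff_disj)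
    also have "\<dots> \<le> C * exp (k * u powr a)"
      using assms that by (intro mult_left_mono) (auto simp: C_def)
    finally show ?thesis .
  qed
  then show ?thesis by (intro exI[of _ C]) (auto simp: C_def)
qed

lemma integrable_exp_neg_abs_powr:
  fixes k a :: real
  assumes "0 < k" "0 < a"
  shows "integrable lborel (\<lambda>x::real. exp (- k * \<bar>x\<bar> powr a))"
proof -
  obtain C where C: "C > 0" "\<And>u. 0 \<le> u \<Longrightarrow> u ^ 2 \<le> C * exp (k * u powr a)"
    using power_le_mult_exp_powr[OF assms] by blast
  show ?thesis
  proof (rule Bochner_Integration.integrable_bound)
    show "integrable lborel (\<lambda>x::real. (1 + C) * inverse (1 + x ^ 2))"
      using integrable_inverse_1_plus_square by (simp add: set_integrable_def)
    show "AE x in lborel. norm (exp (- k * \<bar>x\<bar> powr a)) \<le> norm ((1 + C) * inverse (1 + x ^ 2))"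
    proof (intro AE_I2)
      fix x :: real
      have "(1 + x ^ 2) * exp (- k * \<bar>x\<bar> powr a)
          \<le> (1 + C) * exp (k * \<bar>x\<bar> powr a) * exp (- k * \<bar>x\<bar> powr a)"
        using C(2)[of "\<bar>x\<bar>"] assms by (intro mult_right_mono) (auto simp: algebra_simps add_mono)
      also have "\<dots> = 1 + C" by (simp add: mult.assoc exp_add[symmetric])
      finally show "norm (exp (- k * \<bar>x\<bar> powr a)) \<le> norm ((1 + C) * inverse (1 + x ^ 2))"
        using C(1) by (simp add: field_simps add_pos_nonneg)
    qed
  qed simp
qed

lemma integrable_exp_neg_norm_powr:
  fixes k a :: real
  assumes "0 < k" "0 < a"
  shows "integrable lborel (\<lambda>\<xi>::'a::euclidean_space. exp (- k * norm \<xi> powr a))"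
proof (rule integrableI_bounded)
  define k' where "k' = k / real DIM('a)"
  have k': "0 < k'" unfolding k'_def using assms by simp
  have pointwise: "exp (- k * norm \<xi> powr a) \<le> (\<Prod>b\<in>Basis. exp (- k' * \<bar>\<xi> \<bullet> b\<bar> powr a))"
    for \<xi> :: 'a
  proof -
    have "(\<Sum>b\<in>(Basis::'a set). k' * \<bar>\<xi> \<bullet> b\<bar> powr a) \<le> (\<Sum>b\<in>(Basis::'a set). k' * norm \<xi> powr a)"
      using assms k' by (intro sum_mono mult_left_mono powr_mono2) (auto simp: Basis_le_norm)
    then show ?thesis
      by (simp add: k'_def exp_sum[symmetric] sum_negf)
  qed
  have "(\<integral>\<^sup>+\<xi>. ennreal (norm (exp (- k * norm (\<xi>::'a) powr a))) \<partial>lborel)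
      \<le> (\<integral>\<^sup>+\<xi>. (\<Prod>b\<in>Basis. ennreal (exp (- k' * \<bar>(\<xi>::'a) \<bullet> b\<bar> powr a))) \<partial>lborel)"
    by (rule nn_integral_mono) (use pointwise in \<open>auto simp: prod_ennreal intro!: ennreal_leI\<close>)
  also have "\<dots> = (\<Prod>b\<in>(Basis::'a set). \<integral>\<^sup>+x. ennreal (exp (- k' * \<bar>x\<bar> powr a)) \<partial>lborel)"
    by (rule nn_integral_lborel_prod) auto
  also have "\<dots> < \<infinity>"
    using integrableD(2)[OF integrable_exp_neg_abs_powr[OF k' assms(2)]]
    by (simp add: power_less_top_ennreal top.not_eq_extremum)
  finally show "(\<integral>\<^sup>+\<xi>. ennreal (norm (exp (- k * norm (\<xi>::'a) powr a))) \<partial>lborel) < \<infinity>" .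
qed simp

lemma integrable_power_norm_mult_exp_neg_norm_powr:
  fixes k a :: real
  assumes "0 < k" "0 < a"
  shows "integrable lborel (\<lambda>\<xi>::'a::euclidean_space. norm \<xi> ^ n * exp (- k * norm \<xi> powr a))"
proof -
  obtain C where C: "C > 0" "\<And>u. 0 \<le> u \<Longrightarrow> u ^ n \<le> C * exp (k / 2 * u powr a)"
    using power_le_mult_exp_powr[of "k / 2" a] assms by auto
  show ?thesis
  proof (rule Bochner_Integration.integrable_bound)
    show "integrable lborel (\<lambda>\<xi>::'a. C * exp (- (k / 2) * norm \<xi> powr a))"
      using integrable_exp_neg_norm_powr[of "k / 2" a] assms by (intro integrable_mult_right) simp
    show "AE \<xi> in lborel. norm (norm \<xi> ^ n * exp (- k * norm \<xi> powr a))
                           \<le> norm (C * exp (- (k / 2) * norm (\<xi>::'a) powr a))"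
    proof (intro AE_I2)
      fix \<xi> :: 'a
      have "norm \<xi> ^ n * exp (- k * norm \<xi> powr a)
          \<le> C * exp (k / 2 * norm \<xi> powr a) * exp (- k * norm \<xi> powr a)"
        by (intro mult_right_mono C(2)) auto
      also have "\<dots> = C * exp (- (k / 2) * norm \<xi> powr a)"
        by (simp add: mult.assoc exp_add[symmetric])
      finally show "norm (norm \<xi> ^ n * exp (- k * norm \<xi> powr a))
                     \<le> norm (C * exp (- (k / 2) * norm (\<xi>::'a) powr a))"
        using C(1) by simp
    qed
  qed simp
qed

section \<open>Lower bound for the stable density\<close>

lemma one_minus_square_div_two_le_cos: "1 - x ^ 2 / 2 \<le> cos (x::real)"
proof -
  have "sin (x / 2) ^ 2 \<le> (x / 2) ^ 2"
    using abs_sin_x_le_abs_x[of "x / 2"] by (metis abs_ge_zero power2_abs power_mono)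
  then show ?thesis
    using cos_double_sin[of "x / 2"] by (simp add: power_divide)
qed

lemma integral_cos_inner_ge:
  fixes E :: "'a::euclidean_space \<Rightarrow> real"
  assumes [measurable]: "E \<in> borel_measurable borel" and nonneg: "\<And>\<xi>. 0 \<le> E \<xi>"
    and int: "integrable lborel E" and int2: "integrable lborel (\<lambda>\<xi>. norm \<xi> ^ 2 * E \<xi>)"
  shows "(\<integral>\<xi>. E \<xi> \<partial>lborel) - norm w ^ 2 / 2 * (\<integral>\<xi>. norm \<xi> ^ 2 * E \<xi> \<partial>lborel)
           \<le> (\<integral>\<xi>. cos (\<xi> \<bullet> w) * E \<xi> \<partial>lborel)"
proof -
  have "integrable lborel (\<lambda>\<xi>. cos (\<xi> \<bullet> w) * E \<xi>)"
    by (rule Bochner_Integration.integrable_bound[OF int])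
       (auto simp: abs_mult nonneg intro!: mult_left_le_one_le)
  moreover have "E \<xi> - norm w ^ 2 / 2 * (norm \<xi> ^ 2 * E \<xi>) \<le> cos (\<xi> \<bullet> w) * E \<xi>" for \<xi>
  proof -
    have "(\<xi> \<bullet> w) ^ 2 \<le> (norm \<xi> * norm w) ^ 2"
      using Cauchy_Schwarz_ineq2[of \<xi> w] by (metis abs_ge_zero power2_abs power_mono)
    then have "1 - norm w ^ 2 / 2 * norm \<xi> ^ 2 \<le> cos (\<xi> \<bullet> w)"
      using one_minus_square_div_two_le_cos[of "\<xi> \<bullet> w"] by (simp add: power_mult_distrib mult.commute)
    from mult_right_mono[OF this nonneg] show ?thesis by (simp add: algebra_simps)
  qed
  ultimately have "(\<integral>\<xi>. E \<xi> - norm w ^ 2 / 2 * (norm \<xi> ^ 2 * E \<xi>) \<partial>lborel)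
      \<le> (\<integral>\<xi>. cos (\<xi> \<bullet> w) * E \<xi> \<partial>lborel)"
    using int int2 by (intro integral_mono) auto
  then show ?thesis using int int2 by simp
qed

lemma lborel_integral_scaleR:
  fixes f :: "'a::euclidean_space \<Rightarrow> real"
  assumes [measurable]: "f \<in> borel_measurable borel" and c: "0 < c"
  shows "(\<integral>x. f x \<partial>lborel) = c ^ DIM('a) * (\<integral>x. f (c *\<^sub>R x) \<partial>lborel)"
proof -
  have "lborel = density (distr lborel borel (\<lambda>x. (0::'a) + c *\<^sub>R x)) (\<lambda>_. \<bar>c\<bar> ^ DIM('a))"
    using lborel_affine[of c 0] c by simp
  then have "(\<integral>x. f x \<partial>lborel)
      = (\<integral>x. f x \<partial>density (distr lborel borel (\<lambda>x. (0::'a) + c *\<^sub>R x)) (\<lambda>_. \<bar>c\<bar> ^ DIM('a)))"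
    by simp
  also have "\<dots> = (\<integral>x. \<bar>c\<bar> ^ DIM('a) *\<^sub>R f (0 + c *\<^sub>R x) \<partial>lborel)"
    by (simp add: integral_density integral_distr)
  finally show ?thesis using c by simp
qed

lemma stable_density_scaling:
  fixes z :: "'a::euclidean_space"
  assumes \<alpha>: "0 < \<alpha>" and s: "0 < s"
  shows "stable_density \<alpha> s z
           = s powr (- real DIM('a) / \<alpha>) * stable_density \<alpha> 1 (s powr (- 1 / \<alpha>) *\<^sub>R z)"
proof -
  define c where "c = s powr (- 1 / \<alpha>)"
  have c: "0 < c" unfolding c_def using s by simp
  have "c powr \<alpha> = s powr (- 1)"
    unfolding c_def powr_powr using \<alpha> by simp
  then have "s * c powr \<alpha> = 1"
    using s by (simp add: powr_minus)
  then have "s * norm (c *\<^sub>R \<xi>) powr \<alpha> = norm \<xi> powr \<alpha>" for \<xi> :: 'a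
    using c by (simp add: powr_mult mult.assoc[symmetric])
  then have "(\<integral>\<xi>. cos (\<xi> \<bullet> z) * exp (- s * norm \<xi> powr \<alpha>) \<partial>lborel)
      = c ^ DIM('a) * (\<integral>\<xi>. cos (\<xi> \<bullet> (c *\<^sub>R z)) * exp (- 1 * norm \<xi> powr \<alpha>) \<partial>lborel)"
    using lborel_integral_scaleR[of "\<lambda>\<xi>. cos (\<xi> \<bullet> z) * exp (- s * norm \<xi> powr \<alpha>)", OF _ c]
    by simp
  moreover have "c ^ DIM('a) = s powr (- real DIM('a) / \<alpha>)"
    unfolding c_def using s by (simp add: powr_realpow[symmetric] powr_powr)
  ultimately show ?thesis
    unfolding stable_density_def c_def by simp
qed

lemma stable_density_one_lower_bound:
  assumes \<alpha>: "0 < \<alpha>"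
  shows "\<exists>\<delta>>0. \<exists>C>0. \<forall>w::'a::euclidean_space. norm w \<le> \<delta> \<longrightarrow> C \<le> stable_density \<alpha> 1 w"
proof -
  define E :: "'a \<Rightarrow> real" where "E \<xi> = exp (- 1 * norm \<xi> powr \<alpha>)" for \<xi>
  have [measurable]: "E \<in> borel_measurable borel" unfolding E_def by measurable
  have int: "integrable lborel E"
    unfolding E_def by (rule integrable_exp_neg_norm_powr) (use \<alpha> in auto)
  have int2: "integrable lborel (\<lambda>\<xi>. norm \<xi> ^ 2 * E \<xi>)"
    unfolding E_def by (rule integrable_power_norm_mult_exp_neg_norm_powr) (use \<alpha> in auto)
  define I0 where "I0 = (\<integral>\<xi>. E \<xi> \<partial>lborel)"
  define I2 where "I2 = (\<integral>\<xi>. norm \<xi> ^ 2 * E \<xi> \<partial>lborel)"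
  have "0 \<le> I2" unfolding I2_def E_def by (intro integral_nonneg_AE) auto
  have "0 < I0"
  proof -
    have "ae_filter (lborel::'a measure) \<noteq> bot"
      by (simp add: ae_filter_eq_bot_iff)
    then have "\<not> (AE \<xi> in lborel. E \<xi> = 0)"
      by (simp add: E_def trivial_limit_def)
    then have "I0 \<noteq> 0"
      unfolding I0_def using int by (subst integral_nonneg_eq_0_iff_AE) (auto simp: E_def)
    moreover have "0 \<le> I0" unfolding I0_def E_def by (intro integral_nonneg_AE) auto
    ultimately show ?thesis by simp
  qed
  define \<delta> where "\<delta> = sqrt (I0 / (I2 + 1))"
  have "(2 * pi) powr (- real DIM('a)) * (I0 / 2) \<le> stable_density \<alpha> 1 w" if "norm w \<le> \<delta>" for w :: 'a
  proof -
    have "norm w ^ 2 \<le> I0 / (I2 + 1)"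
      using power_mono[OF that[unfolded \<delta>_def] norm_ge_zero, of 2] \<open>0 \<le> I2\<close> \<open>0 < I0\<close> by simp
    then have "norm w ^ 2 * I2 \<le> I0 / (I2 + 1) * I2"
      using \<open>0 \<le> I2\<close> by (rule mult_right_mono)
    also have "\<dots> \<le> I0" using \<open>0 \<le> I2\<close> \<open>0 < I0\<close> by (simp add: field_simps)
    finally have "I0 / 2 \<le> I0 - norm w ^ 2 / 2 * I2" by simp
    also have "\<dots> \<le> (\<integral>\<xi>. cos (\<xi> \<bullet> w) * E \<xi> \<partial>lborel)"
      unfolding I0_def I2_def by (rule integral_cos_inner_ge[OF _ _ int int2]) (auto simp: E_def)
    finally show ?thesis
      unfolding stable_density_def E_def by (intro mult_left_mono) auto
  qed
  moreover have "0 < \<delta>" "0 < (2 * pi) powr (- real DIM('a)) * (I0 / 2)"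
    unfolding \<delta>_def using \<open>0 \<le> I2\<close> \<open>0 < I0\<close> by auto
  ultimately show ?thesis by blast
qed

lemma stable_density_lower_bound:
  assumes \<alpha>: "0 < \<alpha>"
  shows "\<exists>\<delta>>0. \<exists>C>0. \<forall>s>0. \<forall>z::'a::euclidean_space. norm z \<le> \<delta> * s powr (1 / \<alpha>) \<longrightarrow>
           C * s powr (- real DIM('a) / \<alpha>) \<le> stable_density \<alpha> s z"
proof -
  obtain \<delta> C where "0 < \<delta>" "0 < C" and C: "\<And>w::'a. norm w \<le> \<delta> \<Longrightarrow> C \<le> stable_density \<alpha> 1 w"
    using stable_density_one_lower_bound[OF \<alpha>] by blast
  have "C * s powr (- real DIM('a) / \<alpha>) \<le> stable_density \<alpha> s z"
    if s: "0 < s" and z: "norm z \<le> \<delta> * s powr (1 / \<alpha>)" for s and z :: 'a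
  proof -
    have "norm (s powr (- 1 / \<alpha>) *\<^sub>R z) = s powr (- 1 / \<alpha>) * norm z" by simp
    also have "\<dots> \<le> s powr (- 1 / \<alpha>) * (\<delta> * s powr (1 / \<alpha>))" using z by (simp add: mult_left_mono)
    also have "\<dots> = \<delta>" using s by (simp add: powr_minus_divide field_simps)
    finally have "C \<le> stable_density \<alpha> 1 (s powr (- 1 / \<alpha>) *\<^sub>R z)" by (rule C)
    then show ?thesis
      unfolding stable_density_scaling[OF \<alpha> s, of z] by (simp add: mult.commute[of C] mult_left_mono)
  qed
  with \<open>0 < \<delta>\<close> \<open>0 < C\<close> show ?thesis by blast
qed

section \<open>Lower bound for the kernel\<close>

lemma ex_pos_real_le_ennreal:
  fixes x :: ennreal
  assumes "x \<noteq> 0"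
  shows "\<exists>m>0. ennreal m \<le> x"
proof (intro exI conjI)
  show "0 < enn2real (min x 1)"
    using assms by (simp add: enn2real_positive_iff min_def zero_less_iff_neq_zero order.strict_trans1)
  show "ennreal (enn2real (min x 1)) \<le> x"
    by (cases x) (auto simp: min_def)
qed

lemma nn_integral_indicator_ne_0_if_not_AE_0:
  fixes f :: "'a \<Rightarrow> ennreal" and A :: "nat \<Rightarrow> 'a set"
  assumes [measurable]: "f \<in> borel_measurable M" "\<And>n. A n \<in> sets M"
    and "\<not> (AE x in M. x \<in> (\<Union>n. A n) \<longrightarrow> f x = 0)"
  shows "\<exists>n. (\<integral>\<^sup>+x. indicator (A n) x * f x \<partial>M) \<noteq> 0"
proof (rule ccontr)
  assume "\<not> ?thesis"
  then have "AE x in M. indicator (A n) x * f x = 0" for n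
    by (subst (asm) nn_integral_0_iff_AE) auto
  then have "AE x in M. \<forall>n. indicator (A n) x * f x = 0"
    by (subst AE_all_countable) blast
  then have "AE x in M. x \<in> (\<Union>n. A n) \<longrightarrow> f x = 0"
    by eventually_elim (auto simp: indicator_def)
  with assms(3) show False by blast
qed

lemma subordinator_density_not_AE_0_near_0:
  assumes sd: "is_subordinator_density \<beta> g" and "\<beta> < 1" and "0 < \<epsilon>"
  shows "\<not> (AE u in lborel. u \<le> \<epsilon> \<longrightarrow> g u = 0)"
proof
  assume vanish: "AE u in lborel. u \<le> \<epsilon> \<longrightarrow> g u = 0"
  have [measurable]: "g \<in> borel_measurable borel" and g_nonneg: "\<And>u. 0 \<le> g u"
    and laplace: "\<And>s. 0 < s \<Longrightarrow> (\<integral>\<^sup>+u. ennreal (exp (- s * u) * g u) \<partial>lborel) = ennreal (exp (- (s powr \<beta>)))"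
    using sd unfolding is_subordinator_density_def by auto
  have "(s - 1) * \<epsilon> + 1 \<le> s powr \<beta>" if s: "1 \<le> s" for s
  proof -
    have "ennreal (exp (- (s powr \<beta>))) = (\<integral>\<^sup>+u. ennreal (exp (- s * u) * g u) \<partial>lborel)"
      using laplace s by simp
    also have "\<dots> \<le> (\<integral>\<^sup>+u. ennreal (exp (- (s - 1) * \<epsilon>)) * ennreal (exp (- 1 * u) * g u) \<partial>lborel)"
    proof (rule nn_integral_mono_AE)
      show "AE u in lborel. ennreal (exp (- s * u) * g u)
              \<le> ennreal (exp (- (s - 1) * \<epsilon>)) * ennreal (exp (- 1 * u) * g u)"
        using vanish
      proof eventually_elim
        case (elim u)
        show ?case
        proof (cases "u \<le> \<epsilon>")
          case False
          have "exp (- s * u) = exp (- (s - 1) * u) * exp (- 1 * u)"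
            by (simp add: exp_add[symmetric] algebra_simps)
          also have "\<dots> \<le> exp (- (s - 1) * \<epsilon>) * exp (- 1 * u)"
            using False s by (intro mult_right_mono) (auto simp: mult_le_cancel_left)
          finally show ?thesis
            using g_nonneg[of u] by (simp add: ennreal_mult[symmetric] mult.assoc[symmetric] mult_right_mono)
        qed (use elim in simp)
      qed
    qed
    also have "\<dots> = ennreal (exp (- (s - 1) * \<epsilon>)) * ennreal (exp (- 1))"
      using laplace[of 1] by (simp add: nn_integral_cmult)
    finally have "exp (- (s powr \<beta>)) \<le> exp (- (s - 1) * \<epsilon>) * exp (- 1)"
      by (simp add: ennreal_mult[symmetric])
    then show ?thesis
      unfolding exp_add[symmetric] by (simp add: algebra_simps)
  qed
  moreover have "eventually (\<lambda>s. s powr \<beta> < (s - 1) * \<epsilon> + 1) at_top"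
    using assms by real_asymp
  then obtain S where "\<And>s. S \<le> s \<Longrightarrow> s powr \<beta> < (s - 1) * \<epsilon> + 1"
    by (auto simp: eventually_at_top_linorder)
  ultimately show False
    by (metis max.cobounded1 max.cobounded2 not_le)
qed

lemma subordinator_density_mass_near_0:
  assumes sd: "is_subordinator_density \<beta> g" and "\<beta> < 1" and \<epsilon>: "0 < \<epsilon>"
  shows "\<exists>a m. 0 < a \<and> a \<le> \<epsilon> \<and> 0 < m \<and>
           ennreal m \<le> (\<integral>\<^sup>+u. indicator {a..\<epsilon>} u * ennreal (g u) \<partial>lborel)"
proof -
  have [measurable]: "g \<in> borel_measurable borel" and g_nonneg: "\<And>u. 0 \<le> g u"
    and g_neg: "\<And>u. u \<le> 0 \<Longrightarrow> g u = 0"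
    using sd unfolding is_subordinator_density_def by auto
  have cover: "u \<in> (\<Union>n. {\<epsilon> / Suc n..\<epsilon>})" if "0 < u" "u \<le> \<epsilon>" for u
  proof -
    obtain n :: nat where "\<epsilon> / u < Suc n"
      using reals_Archimedean2 by (metis less_Suc_eq of_nat_Suc order_less_trans lessI of_nat_less_iff)
    then have "\<epsilon> / Suc n \<le> u" using that \<epsilon> by (simp add: field_simps)
    with that show ?thesis by auto
  qed
  have "\<not> (AE u in lborel. u \<in> (\<Union>n. {\<epsilon> / Suc n..\<epsilon>}) \<longrightarrow> ennreal (g u) = 0)"
  proof
    assume "AE u in lborel. u \<in> (\<Union>n. {\<epsilon> / Suc n..\<epsilon>}) \<longrightarrow> ennreal (g u) = 0"
    then have "AE u in lborel. u \<le> \<epsilon> \<longrightarrow> g u = 0"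
    proof eventually_elim
      case (elim u)
      show ?case
      proof (cases "0 < u")
        case True
        then show ?thesis using elim cover g_nonneg by auto
      qed (simp add: g_neg)
    qed
    with subordinator_density_not_AE_0_near_0[OF assms] show False by blast
  qed
  then obtain n where "(\<integral>\<^sup>+u. indicator {\<epsilon> / Suc n..\<epsilon>} u * ennreal (g u) \<partial>lborel) \<noteq> 0"
    using nn_integral_indicator_ne_0_if_not_AE_0[of "\<lambda>u. ennreal (g u)" lborel "\<lambda>n. {\<epsilon> / Suc n..\<epsilon>}"]
    by auto
  moreover have "0 < \<epsilon> / Suc n" "\<epsilon> / Suc n \<le> \<epsilon>" using \<epsilon> by (auto simp: field_simps)
  ultimately show ?thesis using ex_pos_real_le_ennreal by blast
qed

lemma Gker_ge_mass_window:
  fixes \<alpha> \<beta> :: real and g :: "real \<Rightarrow> real" and z :: "'a::euclidean_space"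
  defines "\<gamma> \<equiv> real DIM('a) * (\<beta> / \<alpha>)"
  assumes \<alpha>: "0 < \<alpha>" and \<beta>: "0 < \<beta>" and [measurable]: "g \<in> borel_measurable borel"
    and g_nonneg: "\<And>u. 0 \<le> g u" and "0 < C" "0 \<le> \<delta>" "0 < a" and \<tau>: "0 < \<tau>"
    and stable: "\<And>s w. 0 < s \<Longrightarrow> norm (w::'a) \<le> \<delta> * s powr (1 / \<alpha>) \<Longrightarrow>
                   C * s powr (- real DIM('a) / \<alpha>) \<le> stable_density \<alpha> s w"
    and z: "norm z \<le> \<delta> * (\<tau> / \<epsilon>) powr (\<beta> / \<alpha>)"
  shows "ennreal (C * a powr \<gamma> * \<tau> powr (- \<gamma>)) * (\<integral>\<^sup>+u. indicator {a..\<epsilon>} u * ennreal (g u) \<partial>lborel)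
           \<le> Gker \<alpha> \<beta> g \<tau> z"
proof -
  define K where "K = C * a powr \<gamma> * \<tau> powr (- \<gamma>)"
  have "0 \<le> K" unfolding K_def using \<open>0 < C\<close> by simp
  have pointwise: "ennreal K * (indicator {a..\<epsilon>} u * ennreal (g u))
      \<le> indicator {0<..} u * ennreal (stable_density \<alpha> ((\<tau> / u) powr \<beta>) z * g u)" for u
  proof (cases "u \<in> {a..\<epsilon>}")
    case True
    then have u: "a \<le> u" "u \<le> \<epsilon>" "0 < u" using \<open>0 < a\<close> by auto
    define s where "s = (\<tau> / u) powr \<beta>"
    have "0 < s" unfolding s_def using \<tau> u by simp
    have "(\<tau> / \<epsilon>) powr (\<beta> / \<alpha>) \<le> (\<tau> / u) powr (\<beta> / \<alpha>)"
      using \<tau> u \<alpha> \<beta> by (intro powr_mono2 divide_left_mono) auto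
    also have "\<dots> = s powr (1 / \<alpha>)"
      unfolding s_def using \<tau> u by (simp add: powr_powr)
    finally have "norm z \<le> \<delta> * s powr (1 / \<alpha>)"
      using z \<open>0 \<le> \<delta>\<close> by (meson mult_left_mono order_trans)
    have "K \<le> C * (u powr \<gamma> * \<tau> powr (- \<gamma>))"
      unfolding K_def mult.assoc using u \<open>0 < a\<close> \<open>0 < C\<close> \<alpha> \<beta>
      by (intro mult_left_mono mult_right_mono powr_mono2) (auto simp: \<gamma>_def)
    also have "u powr \<gamma> * \<tau> powr (- \<gamma>) = s powr (- real DIM('a) / \<alpha>)"
      unfolding s_def \<gamma>_def using \<tau> u \<alpha>
      by (simp add: powr_powr powr_divide powr_minus_divide field_simps)
    also have "C * s powr (- real DIM('a) / \<alpha>) \<le> stable_density \<alpha> s z"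
      by (rule stable[OF \<open>0 < s\<close> \<open>norm z \<le> \<delta> * s powr (1 / \<alpha>)\<close>])
    finally have "K * g u \<le> stable_density \<alpha> s z * g u" by (intro mult_right_mono g_nonneg)
    then show ?thesis
      using True u \<open>0 \<le> K\<close> g_nonneg[of u] unfolding s_def
      by (simp add: ennreal_mult'[symmetric] ennreal_leI)
  qed simp
  have "ennreal K * (\<integral>\<^sup>+u. indicator {a..\<epsilon>} u * ennreal (g u) \<partial>lborel)
      = (\<integral>\<^sup>+u. ennreal K * (indicator {a..\<epsilon>} u * ennreal (g u)) \<partial>lborel)"
    by (rule nn_integral_cmult[symmetric]) auto
  also have "\<dots> \<le> Gker \<alpha> \<beta> g \<tau> z"
    unfolding Gker_def by (rule nn_integral_mono) (rule pointwise)
  finally show ?thesis unfolding K_def .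
qed

lemma Gker_lower_bound:
  fixes g :: "real \<Rightarrow> real"
  assumes \<alpha>: "0 < \<alpha>" and \<beta>: "0 < \<beta>" "\<beta> < 1" and sd: "is_subordinator_density \<beta> g" and R: "0 < R"
  shows "\<exists>c>0. \<forall>\<tau>>0. \<forall>z::'a::euclidean_space. norm z \<le> R * \<tau> powr (\<beta> / \<alpha>) \<longrightarrow>
           ennreal (c * \<tau> powr (- (real DIM('a) * (\<beta> / \<alpha>)))) \<le> Gker \<alpha> \<beta> g \<tau> z"
proof -
  define \<rho> where "\<rho> = \<beta> / \<alpha>"
  have "0 < \<rho>" unfolding \<rho>_def using \<alpha> \<beta> by auto
  have [measurable]: "g \<in> borel_measurable borel" and g_nonneg: "\<And>u. 0 \<le> g u"
    using sd unfolding is_subordinator_density_def by auto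
  obtain \<delta> C where "0 < \<delta>" "0 < C" and stable: "\<And>s w. 0 < s \<Longrightarrow> norm (w::'a) \<le> \<delta> * s powr (1 / \<alpha>) \<Longrightarrow>
      C * s powr (- real DIM('a) / \<alpha>) \<le> stable_density \<alpha> s w"
    using stable_density_lower_bound[OF \<alpha>] by blast
  define \<epsilon> where "\<epsilon> = (\<delta> / R) powr (1 / \<rho>)"
  have "0 < \<epsilon>" unfolding \<epsilon>_def using \<open>0 < \<delta>\<close> R by simp
  obtain a m where "0 < a" "a \<le> \<epsilon>" "0 < m"
    and m: "ennreal m \<le> (\<integral>\<^sup>+u. indicator {a..\<epsilon>} u * ennreal (g u) \<partial>lborel)"
    using subordinator_density_mass_near_0[OF sd \<beta>(2) \<open>0 < \<epsilon>\<close>] by blast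
  define c where "c = C * a powr (real DIM('a) * \<rho>) * m"
  have "ennreal (c * \<tau> powr (- (real DIM('a) * \<rho>))) \<le> Gker \<alpha> \<beta> g \<tau> z"
    if \<tau>: "0 < \<tau>" and z: "norm z \<le> R * \<tau> powr \<rho>" for \<tau> and z :: 'a
  proof -
    have "\<delta> * (\<tau> / \<epsilon>) powr \<rho> = R * \<tau> powr \<rho>"
      unfolding \<epsilon>_def using \<tau> \<open>0 < \<delta>\<close> R \<open>0 < \<rho>\<close> by (simp add: powr_divide powr_powr powr_mult)
    then have "ennreal (C * a powr (real DIM('a) * \<rho>) * \<tau> powr (- (real DIM('a) * \<rho>)))
        * (\<integral>\<^sup>+u. indicator {a..\<epsilon>} u * ennreal (g u) \<partial>lborel) \<le> Gker \<alpha> \<beta> g \<tau> z"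
      using z \<open>0 < \<delta>\<close> unfolding \<rho>_def
      by (intro Gker_ge_mass_window[OF \<alpha> \<beta>(1) _ g_nonneg \<open>0 < C\<close> _ \<open>0 < a\<close> \<tau> stable]) auto
    moreover have "ennreal (c * \<tau> powr (- (real DIM('a) * \<rho>)))
        \<le> ennreal (C * a powr (real DIM('a) * \<rho>) * \<tau> powr (- (real DIM('a) * \<rho>))) * ennreal m"
      unfolding c_def using \<open>0 < C\<close> \<open>0 < m\<close> by (simp add: ennreal_mult'[symmetric] mult_ac)
    ultimately show ?thesis
      using m by (meson mult_left_mono order_trans zero_le)
  qed
  moreover have "0 < c" unfolding c_def using \<open>0 < C\<close> \<open>0 < a\<close> \<open>0 < m\<close> by simp
  ultimately show ?thesis unfolding \<rho>_def by blast
qed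

section \<open>Improving lower bounds along the Duhamel equation\<close>

lemma enn_powr_mono:
  assumes "0 \<le> r" "ennreal r \<le> v" "0 < q"
  shows "ennreal (r powr q) \<le> enn_powr v q"
proof (cases "v = \<infinity>")
  case False
  then have "v = ennreal (enn2real v)"
    by (simp add: less_top[symmetric] ennreal_enn2real)
  with assms(1,2) have "r \<le> enn2real v"
    by (metis enn2real_nonneg ennreal_le_iff)
  then show ?thesis
    using False assms(1,3) by (simp add: enn_powr_def ennreal_leI powr_mono2)
qed (simp add: enn_powr_def)

definition parabolic_lower_bound ::
    "(real \<Rightarrow> 'a::real_normed_vector \<Rightarrow> ennreal) \<Rightarrow> real \<Rightarrow> real \<Rightarrow> real \<Rightarrow> real \<Rightarrow> bool" where
  "parabolic_lower_bound V \<rho> \<gamma> T L \<longleftrightarrow>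
     (\<forall>t\<ge>T. \<forall>x. norm x \<le> t powr \<rho> \<longrightarrow> ennreal (L * t powr (- \<gamma>)) \<le> V t x)"

lemma parabolic_lower_bound_mono:
  fixes V :: "real \<Rightarrow> 'a::real_normed_vector \<Rightarrow> ennreal"
  assumes "parabolic_lower_bound V \<rho> \<gamma> T L" "T \<le> T'" "L' \<le> L"
  shows "parabolic_lower_bound V \<rho> \<gamma> T' L'"
  unfolding parabolic_lower_bound_def
proof (intro allI impI)
  fix t and x :: 'a assume "T' \<le> t" "norm x \<le> t powr \<rho>"
  then have "ennreal (L * t powr (- \<gamma>)) \<le> V t x"
    using assms(1,2) unfolding parabolic_lower_bound_def by auto
  moreover have "L' * t powr (- \<gamma>) \<le> L * t powr (- \<gamma>)"
    using assms(3) by (simp add: mult_right_mono)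
  ultimately show "ennreal (L' * t powr (- \<gamma>)) \<le> V t x"
    using ennreal_leI order_trans by blast
qed

lemma nonneg_not_AE_0_mass_in_cball:
  fixes f :: "'a::euclidean_space \<Rightarrow> real"
  assumes f_measurable: "f \<in> borel_measurable lborel" and f_nonneg: "\<And>x. 0 \<le> f x"
    and f_nonzero: "\<not> (AE x in lborel. f x = 0)"
  shows "\<exists>r m. 0 \<le> r \<and> 0 < m \<and> ennreal m \<le> (\<integral>\<^sup>+y. indicator (cball 0 r) y * ennreal (f y) \<partial>lborel)"
proof -
  have [measurable]: "f \<in> borel_measurable borel"
    using f_measurable by (simp add: measurable_lborel1)
  have "\<not> (AE y in lborel. y \<in> (\<Union>n::nat. cball 0 (real n)) \<longrightarrow> ennreal (f y) = 0)"
  proof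
    assume "AE y in lborel. y \<in> (\<Union>n::nat. cball 0 (real n)) \<longrightarrow> ennreal (f y) = 0"
    then have "AE y in lborel. f y = 0"
    proof eventually_elim
      case (elim y)
      obtain n :: nat where "norm y \<le> real n" using real_arch_simple by blast
      then have "y \<in> (\<Union>n::nat. cball 0 (real n))" by auto
      with elim f_nonneg[of y] show "f y = 0" by simp
    qed
    with f_nonzero show False by blast
  qed
  then obtain n :: nat where "(\<integral>\<^sup>+y. indicator (cball 0 (real n)) y * ennreal (f y) \<partial>lborel) \<noteq> 0"
    using nn_integral_indicator_ne_0_if_not_AE_0[of "\<lambda>y. ennreal (f y)" lborel "\<lambda>n. cball 0 (real n)"]
    by auto
  then show ?thesis using ex_pos_real_le_ennreal of_nat_0_le_iff by blast
qed

lemma parabolic_lower_bound_from_initial_data: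
  fixes V :: "real \<Rightarrow> 'a::euclidean_space \<Rightarrow> ennreal" and K :: "real \<Rightarrow> 'a \<Rightarrow> ennreal"
    and V0 :: "'a \<Rightarrow> real"
  assumes \<rho>: "0 < \<rho>" and c: "0 < c"
    and kernel: "\<And>\<tau> z. 0 < \<tau> \<Longrightarrow> norm z \<le> 2 * \<tau> powr \<rho> \<Longrightarrow> ennreal (c * \<tau> powr (- \<gamma>)) \<le> K \<tau> z"
    and "V0 \<in> borel_measurable lborel" "\<And>x. 0 \<le> V0 x" "\<not> (AE x in lborel. V0 x = 0)"
    and duhamel: "\<And>t x. 0 < t \<Longrightarrow> (\<integral>\<^sup>+y. K t (x - y) * ennreal (V0 y) \<partial>lborel) \<le> V t x"
  shows "\<exists>T\<ge>1. \<exists>A>0. parabolic_lower_bound V \<rho> \<gamma> T A"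
proof -
  have [measurable]: "V0 \<in> borel_measurable borel" "cball (0::'a) r \<in> sets borel" for r
    using assms(4) by (simp_all add: measurable_lborel1)
  obtain r m where "0 \<le> r" "0 < m"
    and m: "ennreal m \<le> (\<integral>\<^sup>+y. indicator (cball 0 r) y * ennreal (V0 y) \<partial>lborel)"
    using nonneg_not_AE_0_mass_in_cball[OF assms(4-6)] by blast
  define T where "T = max 1 (r powr (1 / \<rho>))"
  have "parabolic_lower_bound V \<rho> \<gamma> T (c * m)"
    unfolding parabolic_lower_bound_def
  proof (intro allI impI)
    fix t :: real and x :: 'a assume t: "T \<le> t" and x: "norm x \<le> t powr \<rho>"
    have "0 < t" using t unfolding T_def by linarith
    have "r \<le> t powr \<rho>"
    proof (cases "r = 0")
      case False
      then have "r = (r powr (1 / \<rho>)) powr \<rho>" using \<rho> \<open>0 \<le> r\<close> by (simp add: powr_powr)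
      also have "\<dots> \<le> t powr \<rho>" using t \<rho> unfolding T_def by (intro powr_mono2) auto
      finally show ?thesis .
    qed (use \<open>0 < t\<close> in simp)
    then have pointwise: "ennreal (c * t powr (- \<gamma>)) * (indicator (cball 0 r) y * ennreal (V0 y))
        \<le> K t (x - y) * ennreal (V0 y)" for y
      using kernel[OF \<open>0 < t\<close>, of "x - y"] x norm_triangle_ineq4[of x y]
      by (cases "y \<in> cball 0 r") (auto simp: mult_right_mono)
    have "ennreal (c * m * t powr (- \<gamma>)) = ennreal (c * t powr (- \<gamma>)) * ennreal m"
      using c \<open>0 < m\<close> by (simp add: ennreal_mult'[symmetric] mult_ac)
    also have "\<dots> \<le> ennreal (c * t powr (- \<gamma>)) * (\<integral>\<^sup>+y. indicator (cball 0 r) y * ennreal (V0 y) \<partial>lborel)"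
      by (intro mult_left_mono m) auto
    also have "\<dots> = (\<integral>\<^sup>+y. ennreal (c * t powr (- \<gamma>)) * (indicator (cball 0 r) y * ennreal (V0 y)) \<partial>lborel)"
      by (rule nn_integral_cmult[symmetric]) auto
    also have "\<dots> \<le> (\<integral>\<^sup>+y. K t (x - y) * ennreal (V0 y) \<partial>lborel)"
      by (rule nn_integral_mono) (rule pointwise)
    also have "\<dots> \<le> V t x"
      by (rule duhamel[OF \<open>0 < t\<close>])
    finally show "ennreal (c * m * t powr (- \<gamma>)) \<le> V t x" .
  qed
  moreover have "1 \<le> T" "0 < c * m" unfolding T_def using c \<open>0 < m\<close> by auto
  ultimately show ?thesis by blast
qed

lemma nn_integral_inverse_atLeastAtMost:
  assumes "0 < a" "a \<le> b"
  shows "(\<integral>\<^sup>+s. indicator {a..b} s * ennreal (1 / s) \<partial>lborel) = ennreal (ln b - ln a)"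
proof -
  have "((\<lambda>s. 1 / s) has_integral (ln b - ln a)) {a..b}"
  proof (rule fundamental_theorem_of_calculus[OF assms(2)])
    fix x assume "x \<in> {a..b}"
    then have "0 < x" using assms by auto
    then show "(ln has_vector_derivative (1 / x)) (at x within {a..b})"
      by (auto intro!: derivative_eq_intros simp: has_real_derivative_iff_has_vector_derivative[symmetric])
  qed
  from nn_integral_has_integral_lebesgue'[OF _ this] assms show ?thesis
    by (simp add: mult.commute)
qed

lemma nn_integral_powr_ge_log:
  assumes T: "1 \<le> T" and k: "0 \<le> k" and t: "2 * exp k * T \<le> t" and p: "p \<le> 1"
  shows "ennreal k \<le> (\<integral>\<^sup>+s. indicator {T..t / 2} s * ennreal (s powr (- p)) \<partial>lborel)"
proof -
  have "1 \<le> exp k" using k by simp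
  then have "2 * T \<le> 2 * exp k * T" using T by simp
  with t T have "T \<le> t / 2" "0 < t" by linarith+
  have "exp k \<le> t / 2 / T" using t T by (simp add: field_simps)
  have "k \<le> ln (t / 2 / T)"
    using \<open>exp k \<le> t / 2 / T\<close> T \<open>0 < t\<close> by (simp add: ln_ge_iff)
  then have "ennreal k \<le> ennreal (ln (t / 2) - ln T)"
    using T \<open>0 < t\<close> by (intro ennreal_leI) (simp add: ln_div ln_mult)
  also have "\<dots> = (\<integral>\<^sup>+s. indicator {T..t / 2} s * ennreal (1 / s) \<partial>lborel)"
    using T \<open>T \<le> t / 2\<close> by (simp add: nn_integral_inverse_atLeastAtMost)
  also have "\<dots> \<le> (\<integral>\<^sup>+s. indicator {T..t / 2} s * ennreal (s powr (- p)) \<partial>lborel)"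
  proof (rule nn_integral_mono)
    fix s
    have "1 / s \<le> s powr (- p)" if "T \<le> s"
    proof -
      have "s powr (- 1) \<le> s powr (- p)" using that T p by (intro powr_mono) auto
      then show ?thesis using that T by (simp add: powr_minus_divide)
    qed
    then show "indicator {T..t / 2} s * ennreal (1 / s) \<le> indicator {T..t / 2} s * ennreal (s powr (- p))"
      by (simp add: indicator_def ennreal_leI)
  qed
  finally show ?thesis .
qed

lemma nn_integral_parabolic_region:
  fixes F :: "real \<Rightarrow> real"
  assumes [measurable]: "F \<in> borel_measurable borel" and F_nonneg: "\<And>s. 0 \<le> F s" and "0 < T"
  shows "(\<integral>\<^sup>+y. (\<integral>\<^sup>+s. indicator {T..b} s * indicator (cball (0::'a::euclidean_space) (s powr \<rho>)) y
             * ennreal (F s) \<partial>lborel) \<partial>lborel)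
       = (\<integral>\<^sup>+s. indicator {T..b} s
             * ennreal (unit_ball_vol (real DIM('a)) * s powr (real DIM('a) * \<rho>) * F s) \<partial>lborel)"
proof -
  have "(\<lambda>(y, s). indicator {T..b} s * indicator (cball (0::'a) (s powr \<rho>)) y * ennreal (F s))
      \<in> borel_measurable (lborel \<Otimes>\<^sub>M lborel)"
    unfolding indicator_def mem_cball dist_0_norm by measurable
  then have "(\<integral>\<^sup>+y. (\<integral>\<^sup>+s. indicator {T..b} s * indicator (cball (0::'a) (s powr \<rho>)) y
             * ennreal (F s) \<partial>lborel) \<partial>lborel)
      = (\<integral>\<^sup>+s. (\<integral>\<^sup>+y. indicator {T..b} s * indicator (cball (0::'a) (s powr \<rho>)) y
             * ennreal (F s) \<partial>lborel) \<partial>lborel)"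
    by (rule lborel_pair.Fubini'[symmetric])
  also have "\<dots> = (\<integral>\<^sup>+s. indicator {T..b} s
             * ennreal (unit_ball_vol (real DIM('a)) * s powr (real DIM('a) * \<rho>) * F s) \<partial>lborel)"
  proof (intro nn_integral_cong)
    fix s :: real
    have "(\<integral>\<^sup>+y. indicator {T..b} s * indicator (cball (0::'a) (s powr \<rho>)) y * ennreal (F s) \<partial>lborel)
        = indicator {T..b} s * ennreal (F s) * emeasure lborel (cball (0::'a) (s powr \<rho>))"
      by (subst nn_integral_cmult_indicator[symmetric]) (auto simp: mult_ac)
    also have "\<dots> = indicator {T..b} s
             * ennreal (unit_ball_vol (real DIM('a)) * s powr (real DIM('a) * \<rho>) * F s)"
      using \<open>0 < T\<close> F_nonneg[of s]
      by (cases "T \<le> s") (auto simp: emeasure_cball powr_power ennreal_mult'[symmetric] mult_ac indicator_def)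
    finally show "(\<integral>\<^sup>+y. indicator {T..b} s * indicator (cball (0::'a) (s powr \<rho>)) y * ennreal (F s) \<partial>lborel)
        = indicator {T..b} s * ennreal (unit_ball_vol (real DIM('a)) * s powr (real DIM('a) * \<rho>) * F s)" .
  qed
  finally show ?thesis .
qed

lemma duhamel_integrand_lower_bound:
  fixes V :: "real \<Rightarrow> 'a::euclidean_space \<Rightarrow> ennreal" and K :: "real \<Rightarrow> 'a \<Rightarrow> ennreal"
  assumes \<rho>: "0 < \<rho>" and \<gamma>: "0 \<le> \<gamma>" and \<eta>: "0 < \<eta>" and L: "0 \<le> L" and "0 < T" and c: "0 \<le> c"
    and kernel: "\<And>\<tau> z. 0 < \<tau> \<Longrightarrow> norm z \<le> 2 * 2 powr \<rho> * \<tau> powr \<rho> \<Longrightarrow>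
                   ennreal (c * \<tau> powr (- \<gamma>)) \<le> K \<tau> z"
    and bound: "parabolic_lower_bound V \<rho> \<gamma> T L"
    and x: "norm x \<le> t powr \<rho>" and s: "T \<le> s" "s \<le> t / 2" and y: "norm y \<le> s powr \<rho>"
  shows "ennreal (c * t powr (- \<gamma>)) * ennreal ((L * s powr (- \<gamma>)) powr (1 + \<eta>))
           \<le> K (t - s) (x - y) * enn_powr (V s y) (1 + \<eta>)"
proof (rule mult_mono)
  have "0 < s" "s < t" using s \<open>0 < T\<close> by auto
  have "norm (x - y) \<le> t powr \<rho> + t powr \<rho>"
    using norm_triangle_ineq4[of x y] x y powr_mono2[of \<rho> s t] \<rho> \<open>0 < s\<close> \<open>s < t\<close> by simp
  also have "\<dots> = 2 * 2 powr \<rho> * (t / 2) powr \<rho>" using \<open>0 < s\<close> \<open>s < t\<close> by (simp add: powr_divide)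
  also have "\<dots> \<le> 2 * 2 powr \<rho> * (t - s) powr \<rho>"
    using s \<rho> \<open>0 < s\<close> by (intro mult_left_mono powr_mono2) auto
  finally have "ennreal (c * (t - s) powr (- \<gamma>)) \<le> K (t - s) (x - y)"
    using \<open>s < t\<close> by (intro kernel) auto
  moreover have "c * t powr (- \<gamma>) \<le> c * (t - s) powr (- \<gamma>)"
    using \<gamma> c \<open>0 < s\<close> \<open>s < t\<close> by (intro mult_left_mono powr_mono2') auto
  ultimately show "ennreal (c * t powr (- \<gamma>)) \<le> K (t - s) (x - y)"
    using ennreal_leI order_trans by blast
  show "ennreal ((L * s powr (- \<gamma>)) powr (1 + \<eta>)) \<le> enn_powr (V s y) (1 + \<eta>)"
    using bound s y L \<eta> unfolding parabolic_lower_bound_def by (intro enn_powr_mono) auto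
qed auto

lemma parabolic_lower_bound_log_gain:
  fixes V :: "real \<Rightarrow> 'a::euclidean_space \<Rightarrow> ennreal" and K :: "real \<Rightarrow> 'a \<Rightarrow> ennreal"
  assumes \<rho>: "0 < \<rho>" and \<gamma>: "\<gamma> = real DIM('a) * \<rho>" and \<eta>: "0 < \<eta>" "\<eta> * \<gamma> \<le> 1" and c: "0 < c"
    and kernel: "\<And>\<tau> z. 0 < \<tau> \<Longrightarrow> norm z \<le> 2 * 2 powr \<rho> * \<tau> powr \<rho> \<Longrightarrow>
                   ennreal (c * \<tau> powr (- \<gamma>)) \<le> K \<tau> z"
    and duhamel: "\<And>t x. 0 < t \<Longrightarrow>
      (\<integral>\<^sup>+y. (\<integral>\<^sup>+s. indicator {0<..<t} s * (K (t - s) (x - y) * enn_powr (V s y) (1 + \<eta>)) \<partial>lborel) \<partial>lborel)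
        \<le> V t x"
    and T: "1 \<le> T" and L: "0 \<le> L" and k: "0 \<le> k" and bound: "parabolic_lower_bound V \<rho> \<gamma> T L"
  shows "parabolic_lower_bound V \<rho> \<gamma> (2 * exp k * T) (c * unit_ball_vol (real DIM('a)) * k * L powr (1 + \<eta>))"
  unfolding parabolic_lower_bound_def
proof (intro allI impI)
  fix t :: real and x :: 'a
  assume t: "2 * exp k * T \<le> t" and x: "norm x \<le> t powr \<rho>"
  define \<omega> where "\<omega> = unit_ball_vol (real DIM('a))"
  have "0 < 2 * exp k * T" using T by simp
  with t have "0 < t" by linarith
  define F where "F s = c * t powr (- \<gamma>) * (L * s powr (- \<gamma>)) powr (1 + \<eta>)" for s
  define Q where "Q = c * \<omega> * L powr (1 + \<eta>) * t powr (- \<gamma>)"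
  have "0 \<le> Q" unfolding Q_def \<omega>_def using c by simp
  have F_eq: "\<omega> * s powr (real DIM('a) * \<rho>) * F s = Q * s powr (- (\<eta> * \<gamma>))" if "0 < s" for s
    unfolding F_def Q_def \<gamma> using that L by (simp add: powr_mult powr_powr powr_add[symmetric] algebra_simps)
  have pointwise: "indicator {T..t / 2} s * indicator (cball 0 (s powr \<rho>)) y * ennreal (F s)
      \<le> indicator {0<..<t} s * (K (t - s) (x - y) * enn_powr (V s y) (1 + \<eta>))" for y s
  proof (cases "T \<le> s \<and> s \<le> t / 2 \<and> norm y \<le> s powr \<rho>")
    case True
    have "0 \<le> \<gamma>" "0 < T" "0 \<le> c" using \<gamma> \<rho> T c by auto
    with True have "ennreal (F s) \<le> K (t - s) (x - y) * enn_powr (V s y) (1 + \<eta>)"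
      using duhamel_integrand_lower_bound[where K=K and V=V and c=c, OF \<rho> _ \<eta>(1) L _ _ kernel bound x] c
      unfolding F_def by (simp add: ennreal_mult)
    moreover have "0 < s" "s < t" using True T \<open>0 < t\<close> by auto
    ultimately show ?thesis using True by (simp add: indicator_def)
  qed (auto simp: indicator_def)
  have "ennreal (c * \<omega> * k * L powr (1 + \<eta>) * t powr (- \<gamma>)) = ennreal Q * ennreal k"
    unfolding Q_def \<omega>_def using c k by (simp add: ennreal_mult'[symmetric] mult_ac)
  also have "\<dots> \<le> ennreal Q * (\<integral>\<^sup>+s. indicator {T..t / 2} s * ennreal (s powr (- (\<eta> * \<gamma>))) \<partial>lborel)"
    using nn_integral_powr_ge_log[OF T k t \<eta>(2)] by (rule mult_left_mono) simp
  also have "\<dots> = (\<integral>\<^sup>+s. indicator {T..t / 2} s * ennreal (\<omega> * s powr (real DIM('a) * \<rho>) * F s) \<partial>lborel)"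
    using T \<open>0 \<le> Q\<close>
    by (subst nn_integral_cmult[symmetric]) (auto intro!: nn_integral_cong simp: F_eq indicator_def ennreal_mult)
  also have "\<dots> = (\<integral>\<^sup>+y. (\<integral>\<^sup>+s. indicator {T..t / 2} s * indicator (cball (0::'a) (s powr \<rho>)) y
      * ennreal (F s) \<partial>lborel) \<partial>lborel)"
    unfolding \<omega>_def
    by (rule nn_integral_parabolic_region[symmetric]) (use T c L in \<open>auto simp: F_def\<close>)
  also have "\<dots> \<le> (\<integral>\<^sup>+y. (\<integral>\<^sup>+s. indicator {0<..<t} s * (K (t - s) (x - y) * enn_powr (V s y) (1 + \<eta>))
      \<partial>lborel) \<partial>lborel)"
    by (intro nn_integral_mono pointwise)
  also have "\<dots> \<le> V t x"
    by (rule duhamel[OF \<open>0 < t\<close>])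
  finally show "ennreal (c * \<omega> * k * L powr (1 + \<eta>) * t powr (- \<gamma>)) \<le> V t x" .
qed

lemma parabolic_lower_bound_ladder:
  fixes V :: "real \<Rightarrow> 'a::real_normed_vector \<Rightarrow> ennreal"
  assumes gain: "\<And>T L. 1 \<le> T \<Longrightarrow> L0 \<le> L \<Longrightarrow> parabolic_lower_bound V \<rho> \<gamma> T L \<Longrightarrow>
                   parabolic_lower_bound V \<rho> \<gamma> (e * T) (2 * e powr \<gamma> * L)"
    and e: "1 \<le> e" and \<gamma>: "0 \<le> \<gamma>" and T0: "1 \<le> T0" and L0: "0 < L0"
    and start: "parabolic_lower_bound V \<rho> \<gamma> T0 L0"
  shows "parabolic_lower_bound V \<rho> \<gamma> (e ^ n * T0) ((2 * e powr \<gamma>) ^ n * L0)"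
proof (induction n)
  case (Suc n)
  have "1 \<le> e powr \<gamma>" using e \<gamma> by (simp add: ge_one_powr_ge_zero)
  then have "1 \<le> (2 * e powr \<gamma>) ^ n" by (intro one_le_power) simp
  then have "L0 \<le> (2 * e powr \<gamma>) ^ n * L0" using L0 by simp
  moreover have "1 * 1 \<le> e ^ n * T0"
    using one_le_power[OF e] e T0 by (intro mult_mono) auto
  ultimately show ?case
    using gain[OF _ _ Suc.IH] by (simp add: mult_ac)
qed (simp add: start)

lemma ex_power_bracket:
  fixes e T0 t :: real
  assumes "1 < e" "0 < T0" "e ^ N * T0 \<le> t"
  shows "\<exists>n\<ge>N. e ^ n * T0 \<le> t \<and> t < e ^ Suc n * T0"
proof -
  obtain m where "t / T0 < e ^ m" using real_arch_pow[OF assms(1)] by blast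
  then have "t < e ^ m * T0" using assms(2) by (simp add: field_simps)
  moreover have "1 * T0 \<le> e ^ N * T0" using assms(1,2) by (intro mult_right_mono one_le_power) auto
  then have "\<not> t < e ^ 0 * T0" using assms(3) by simp
  ultimately obtain n where n: "\<forall>i\<le>n. \<not> t < e ^ i * T0" "t < e ^ Suc n * T0"
    using ex_least_nat_less[of "\<lambda>i. t < e ^ i * T0"] by blast
  have "N \<le> n"
  proof (rule ccontr)
    assume "\<not> N \<le> n"
    then have "e ^ Suc n * T0 \<le> e ^ N * T0" using assms(1,2) by (intro mult_right_mono power_increasing) auto
    then show False using n(2) assms(3) by simp
  qed
  with n show ?thesis by (auto simp: not_less)
qed

lemma parabolic_lower_bound_ladder_unbounded:
  fixes V :: "real \<Rightarrow> 'a::real_normed_vector \<Rightarrow> ennreal"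
  assumes e: "1 < e" and \<gamma>: "0 \<le> \<gamma>" and T0: "0 < T0" and L0: "0 < L0"
    and ladder: "\<And>n. parabolic_lower_bound V \<rho> \<gamma> (e ^ n * T0) ((2 * e powr \<gamma>) ^ n * L0)"
  shows "\<exists>T>0. \<forall>t\<ge>T. \<forall>x. norm x \<le> t powr \<rho> \<longrightarrow> ennreal M \<le> V t x"
proof -
  define B where "B = L0 * (e * T0) powr (- \<gamma>)"
  have "0 < B" unfolding B_def using e T0 L0 by simp
  have rung: "ennreal (2 ^ n * B) \<le> V t x"
    if "e ^ n * T0 \<le> t" "t \<le> e ^ Suc n * T0" "norm x \<le> t powr \<rho>" for n t x
  proof -
    have "0 < e ^ n * T0" using e T0 by simp
    then have "0 < t" using that(1) by linarith
    have "(e ^ n) powr (- \<gamma>) * (e powr \<gamma>) ^ n = 1"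
      using e by (simp add: powr_realpow[symmetric] powr_powr powr_power powr_add[symmetric])
    then have "2 ^ n * B = (2 * e powr \<gamma>) ^ n * L0 * (e ^ Suc n * T0) powr (- \<gamma>)"
      unfolding B_def using e T0 by (simp add: powr_mult power_mult_distrib mult_ac)
    also have "\<dots> \<le> (2 * e powr \<gamma>) ^ n * L0 * t powr (- \<gamma>)"
      using that \<open>0 < t\<close> e T0 L0 \<gamma> by (intro mult_left_mono powr_mono2') auto
    also have "ennreal \<dots> \<le> V t x"
      using ladder[of n] that unfolding parabolic_lower_bound_def by auto
    finally show ?thesis by (simp add: ennreal_leI)
  qed
  obtain N where "M / B < 2 ^ N" using real_arch_pow[of 2 "M / B"] by auto
  then have "M \<le> 2 ^ N * B" using \<open>0 < B\<close> by (simp add: field_simps)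
  have "ennreal M \<le> V t x" if t: "e ^ N * T0 \<le> t" and x: "norm x \<le> t powr \<rho>" for t x
  proof -
    obtain n where "N \<le> n" "e ^ n * T0 \<le> t" "t < e ^ Suc n * T0"
      using ex_power_bracket[OF e T0 t] by blast
    have "M \<le> 2 ^ N * B" by fact
    also have "\<dots> \<le> 2 ^ n * B" using \<open>N \<le> n\<close> \<open>0 < B\<close> by (intro mult_right_mono power_increasing) auto
    finally have "ennreal M \<le> ennreal (2 ^ n * B)" by (rule ennreal_leI)
    also have "\<dots> \<le> V t x"
      using \<open>e ^ n * T0 \<le> t\<close> \<open>t < e ^ Suc n * T0\<close> x by (intro rung) auto
    finally show ?thesis .
  qed
  moreover have "0 < e ^ N * T0" using e T0 by simp
  ultimately show ?thesis by blast
qed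

lemma parabolic_lower_bound_doubling:
  fixes V :: "real \<Rightarrow> 'a::real_normed_vector \<Rightarrow> ennreal"
  defines "e \<equiv> 2 * exp 1"
  assumes D: "0 < D" and \<eta>: "0 < \<eta>"
    and step: "\<And>T L k. 1 \<le> T \<Longrightarrow> 0 \<le> L \<Longrightarrow> 0 \<le> k \<Longrightarrow> parabolic_lower_bound V \<rho> \<gamma> T L \<Longrightarrow>
                 parabolic_lower_bound V \<rho> \<gamma> (2 * exp k * T) (D * k * L powr (1 + \<eta>))"
    and L0: "0 < L0" "2 * e powr \<gamma> \<le> D * L0 powr \<eta>" and L: "L0 \<le> L"
    and T: "1 \<le> T" and bound: "parabolic_lower_bound V \<rho> \<gamma> T L"
  shows "parabolic_lower_bound V \<rho> \<gamma> (e * T) (2 * e powr \<gamma> * L)"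
proof -
  have "2 * e powr \<gamma> * L \<le> D * L0 powr \<eta> * L"
    using L0 L by (simp add: mult_right_mono)
  also have "\<dots> \<le> D * L powr \<eta> * L"
    using D \<eta> L0 L by (intro mult_right_mono mult_left_mono powr_mono2) auto
  also have "\<dots> = D * 1 * L powr (1 + \<eta>)"
    using L0 L by (simp add: powr_add)
  finally have "2 * e powr \<gamma> * L \<le> D * 1 * L powr (1 + \<eta>)" .
  moreover have "parabolic_lower_bound V \<rho> \<gamma> (e * T) (D * 1 * L powr (1 + \<eta>))"
    unfolding e_def mult.assoc[symmetric] using L0 L by (intro step T bound) auto
  ultimately show ?thesis
    using parabolic_lower_bound_mono by blast
qed

lemma parabolic_lower_bound_blowup:
  fixes V :: "real \<Rightarrow> 'a::real_normed_vector \<Rightarrow> ennreal"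
  assumes D: "0 < D" and \<eta>: "0 < \<eta>" and \<gamma>: "0 \<le> \<gamma>"
    and step: "\<And>T L k. 1 \<le> T \<Longrightarrow> 0 \<le> L \<Longrightarrow> 0 \<le> k \<Longrightarrow> parabolic_lower_bound V \<rho> \<gamma> T L \<Longrightarrow>
                 parabolic_lower_bound V \<rho> \<gamma> (2 * exp k * T) (D * k * L powr (1 + \<eta>))"
    and T1: "1 \<le> T1" and A: "0 < A" and start: "parabolic_lower_bound V \<rho> \<gamma> T1 A"
  shows "\<exists>T>0. \<forall>t\<ge>T. \<forall>x. norm x \<le> t powr \<rho> \<longrightarrow> ennreal M \<le> V t x"
proof -
  define e :: real where "e = 2 * exp 1"
  have "1 < e" unfolding e_def using one_less_exp_iff[of 1] by linarith
  have "eventually (\<lambda>k. 2 * e powr \<gamma> \<le> D * (D * k * A powr (1 + \<eta>)) powr \<eta>) at_top"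
    using D A \<eta> by real_asymp
  then obtain N where N: "\<And>k. N \<le> k \<Longrightarrow> 2 * e powr \<gamma> \<le> D * (D * k * A powr (1 + \<eta>)) powr \<eta>"
    by (auto simp: eventually_at_top_linorder)
  define k where "k = max 1 N"
  define L0 where "L0 = D * k * A powr (1 + \<eta>)"
  define T0 where "T0 = 2 * exp k * T1"
  have "1 \<le> k" "2 * e powr \<gamma> \<le> D * L0 powr \<eta>"
    unfolding k_def L0_def by (auto intro: N)
  then have "0 < L0" unfolding L0_def using D A by simp
  have "1 \<le> 2 * exp k" using \<open>1 \<le> k\<close> one_le_exp_iff[of k] by linarith
  then have "1 * 1 \<le> (2 * exp k) * T1" using T1 by (intro mult_mono) auto
  then have "1 \<le> T0" unfolding T0_def by simp
  have "parabolic_lower_bound V \<rho> \<gamma> T0 L0"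
    unfolding T0_def L0_def using step[OF T1 _ _ start] A \<open>1 \<le> k\<close> by simp
  then have ladder: "parabolic_lower_bound V \<rho> \<gamma> (e ^ n * T0) ((2 * e powr \<gamma>) ^ n * L0)" for n
    using parabolic_lower_bound_ladder[OF parabolic_lower_bound_doubling[OF D \<eta> step \<open>0 < L0\<close>]]
      \<open>2 * e powr \<gamma> \<le> D * L0 powr \<eta>\<close> \<gamma> \<open>1 \<le> T0\<close> \<open>0 < L0\<close> \<open>1 < e\<close>
    unfolding e_def by simp
  show ?thesis
    by (rule parabolic_lower_bound_ladder_unbounded[OF \<open>1 < e\<close> \<gamma> _ \<open>0 < L0\<close> ladder])
      (use \<open>1 \<le> T0\<close> in simp)
qed

lemma duhamel_supersolution_unbounded:
  fixes V :: "real \<Rightarrow> 'a::euclidean_space \<Rightarrow> ennreal" and K :: "real \<Rightarrow> 'a \<Rightarrow> ennreal"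
    and V0 :: "'a \<Rightarrow> real"
  assumes \<rho>: "0 < \<rho>" and \<gamma>: "\<gamma> = real DIM('a) * \<rho>" and \<eta>: "0 < \<eta>" "\<eta> * \<gamma> \<le> 1"
    and kernel: "\<And>R. 0 < R \<Longrightarrow> \<exists>c>0. \<forall>\<tau>>0. \<forall>z. norm z \<le> R * \<tau> powr \<rho> \<longrightarrow>
                   ennreal (c * \<tau> powr (- \<gamma>)) \<le> K \<tau> z"
    and V0: "V0 \<in> borel_measurable lborel" "\<And>x. 0 \<le> V0 x" "\<not> (AE x in lborel. V0 x = 0)"
    and linear: "\<And>t x. 0 < t \<Longrightarrow> (\<integral>\<^sup>+y. K t (x - y) * ennreal (V0 y) \<partial>lborel) \<le> V t x"
    and nonlinear: "\<And>t x. 0 < t \<Longrightarrow>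
      (\<integral>\<^sup>+y. (\<integral>\<^sup>+s. indicator {0<..<t} s * (K (t - s) (x - y) * enn_powr (V s y) (1 + \<eta>)) \<partial>lborel) \<partial>lborel)
        \<le> V t x"
  shows "\<exists>T>0. \<forall>t\<ge>T. \<forall>x. norm x \<le> t powr \<rho> \<longrightarrow> ennreal M \<le> V t x"
proof -
  \<comment> \<open>The radius \<open>2 * 2 powr \<rho>\<close> covers \<open>|x - y| \<le> 2 t^\<rho> \<le> 2 * 2^\<rho> (t - s)^\<rho>\<close> for \<open>s \<le> t/2\<close>.\<close>
  obtain c where "0 < c" and c: "\<And>\<tau> z. 0 < \<tau> \<Longrightarrow> norm z \<le> 2 * 2 powr \<rho> * \<tau> powr \<rho> \<Longrightarrow>
      ennreal (c * \<tau> powr (- \<gamma>)) \<le> K \<tau> z"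
    using kernel[of "2 * 2 powr \<rho>"] by auto
  obtain c' where "0 < c'" and c': "\<And>\<tau> z. 0 < \<tau> \<Longrightarrow> norm z \<le> 2 * \<tau> powr \<rho> \<Longrightarrow>
      ennreal (c' * \<tau> powr (- \<gamma>)) \<le> K \<tau> z"
    using kernel[of 2] by auto
  obtain T1 A where "1 \<le> T1" "0 < A" and start: "parabolic_lower_bound V \<rho> \<gamma> T1 A"
    using parabolic_lower_bound_from_initial_data[OF \<rho> \<open>0 < c'\<close> c' V0 linear] by blast
  have "0 < c * unit_ball_vol (real DIM('a))" "0 \<le> \<gamma>" using \<open>0 < c\<close> \<rho> \<gamma> by auto
  then show ?thesis
    using parabolic_lower_bound_blowup[OF _ \<eta>(1) _ parabolic_lower_bound_log_gain[OF \<rho> \<gamma> \<eta> \<open>0 < c\<close> c nonlinear]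
        \<open>1 \<le> T1\<close> \<open>0 < A\<close> start]
    by blast
qed

theorem proposition3p1:
  fixes \<alpha> \<beta> \<eta> :: real
    and g :: "real \<Rightarrow> real"
    and V0 :: "'a::euclidean_space \<Rightarrow> real"
    and V :: "real \<Rightarrow> 'a \<Rightarrow> ennreal"
  assumes "0 < \<alpha>" "\<alpha> < 2" "0 < \<beta>" "\<beta> < 1"
    and "0 < \<eta>" "\<eta> \<le> \<alpha> / (\<beta> * real DIM('a))"
    and "is_subordinator_density \<beta> g"
    and "V0 \<in> borel_measurable lborel" "\<And>x. 0 \<le> V0 x"
    and "\<not> (AE x in lborel. V0 x = 0)"
    and "(\<lambda>z. V (fst z) (snd z)) \<in>
           borel_measurable (restrict_space (lborel \<Otimes>\<^sub>M lborel) ({0<..} \<times> UNIV))"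
    and "\<And>t x. 0 < t \<Longrightarrow>
           V t x = (\<integral>\<^sup>+ y. Gker \<alpha> \<beta> g t (x - y) * ennreal (V0 y) \<partial>lborel)
                 + (\<integral>\<^sup>+ y. (\<integral>\<^sup>+ s. indicator {0<..<t} s *
                        (Gker \<alpha> \<beta> g (t - s) (x - y) * enn_powr (V s y) (1 + \<eta>)) \<partial>lborel) \<partial>lborel)"
  shows "\<forall>M>0. \<exists>T0>0. \<forall>t\<ge>T0.
           (INF x\<in>ball 0 (t powr (\<beta> / \<alpha>)). V t x) \<ge> ennreal M"
proof (intro allI impI)
  fix M :: real
  define \<rho> where "\<rho> = \<beta> / \<alpha>"
  define \<gamma> where "\<gamma> = real DIM('a) * \<rho>"
  have "0 < \<rho>" unfolding \<rho>_def using assms(1,3) by auto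
  have "\<eta> * \<gamma> \<le> 1"
    using assms(1,3,6) unfolding \<gamma>_def \<rho>_def by (simp add: field_simps)
  have kernel: "\<exists>c>0. \<forall>\<tau>>0. \<forall>z::'a. norm z \<le> R * \<tau> powr \<rho> \<longrightarrow>
      ennreal (c * \<tau> powr (- \<gamma>)) \<le> Gker \<alpha> \<beta> g \<tau> z" if "0 < R" for R
    using Gker_lower_bound[OF assms(1,3,4,7) that] unfolding \<gamma>_def \<rho>_def .
  have linear: "(\<integral>\<^sup>+y. Gker \<alpha> \<beta> g t (x - y) * ennreal (V0 y) \<partial>lborel) \<le> V t x"
    if "0 < t" for t x
    using assms(12)[OF that, of x] by (simp add: add_increasing2)
  have nonlinear: "(\<integral>\<^sup>+y. (\<integral>\<^sup>+s. indicator {0<..<t} s *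
      (Gker \<alpha> \<beta> g (t - s) (x - y) * enn_powr (V s y) (1 + \<eta>)) \<partial>lborel) \<partial>lborel) \<le> V t x"
    if "0 < t" for t x
    using assms(12)[OF that, of x] by (simp add: add_increasing)
  obtain T where "0 < T" and "\<And>t x. T \<le> t \<Longrightarrow> norm x \<le> t powr \<rho> \<Longrightarrow> ennreal M \<le> V t x"
    using duhamel_supersolution_unbounded[OF \<open>0 < \<rho>\<close> \<gamma>_def assms(5) \<open>\<eta> * \<gamma> \<le> 1\<close> kernel
        assms(8-10) linear nonlinear] by blast
  then show "\<exists>T0>0. \<forall>t\<ge>T0. (INF x\<in>ball 0 (t powr (\<beta> / \<alpha>)). V t x) \<ge> ennreal M"
    unfolding \<rho>_def by (auto intro!: INF_greatest)
qed

end
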